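(* Let $H_0,H_1$ be complex Hilbert spaces, $G$ a densely defined closed operator from $H_0$ into $H_1$ and $D$ a densely defined closed operator from $H_1$ into $H_0$ with $-G^*\subset D$. Then $\mathrm{BD}(G)=\ker(I-DG)$ and $\mathrm{BD}(D)=\ker(I-GD)$.
   Context: $\mathring D=-G^*$, $\mathring G=-D^*$. Domains carry graph inner products, e.g. $(u,v)_{\mathrm{dom}(G)}=(u,v)_{H_0}+(Gu,Gv)_{H_1}$. $\mathrm{BD}(G)$ is the orthogonal complement of $\mathrm{dom}(\mathring G)$ in $\mathrm{dom}(G)$ and $\mathrm{BD}(D)$ the orthogonal complement of $\mathrm{dom}(\mathring D)$ in $\mathrm{dom}(D)$. $\ker(I-DG)=\{u\in\mathrm{dom}(G):Gu\in\mathrm{dom}(D),\ DGu=u\}$ and $\ker(I-GD)=\{q\in\mathrm{dom}(D):Dq\in\mathrm{dom}(G),\ GDq=q\}$. *)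

theory Defs
  imports "HOL-Analysis.Analysis"
begin

text \<open>A complex Hilbert space is a type of class complex_inner_space that is also complete_space.
  The inner product is linear in the second and conjugate-linear in the first argument;
  the norm (hence metric and topology) is the one induced by the inner product.\<close>

class complex_inner_space = real_normed_vector +
  fixes scaleC :: "complex \<Rightarrow> 'a \<Rightarrow> 'a"
    and cinner :: "'a \<Rightarrow> 'a \<Rightarrow> complex"
  assumes scaleC_add_right: "scaleC a (x + y) = scaleC a x + scaleC a y"
    and scaleC_add_left: "scaleC (a + b) x = scaleC a x + scaleC b x"
    and scaleC_scaleC: "scaleC a (scaleC b x) = scaleC (a * b) x"
    and scaleC_one: "scaleC 1 x = x"
    and scaleC_of_real: "scaleC (complex_of_real r) x = scaleR r x"
    and cinner_conj: "cinner x y = cnj (cinner y x)"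
    and cinner_add_right: "cinner x (y + z) = cinner x y + cinner x z"
    and cinner_scaleC_right: "cinner x (scaleC a y) = a * cinner x y"
    and cinner_self_nonneg: "0 \<le> Re (cinner x x)"
    and norm_cinner: "norm x = sqrt (Re (cinner x x))"

type_synonym ('a, 'b) lop = "'a set \<times> ('a \<Rightarrow> 'b)"

definition opdom :: "('a, 'b) lop \<Rightarrow> 'a set" where "opdom A = fst A"
definition opfun :: "('a, 'b) lop \<Rightarrow> 'a \<Rightarrow> 'b" where "opfun A = snd A"

definition csubspace :: "'a::complex_inner_space set \<Rightarrow> bool" where
  "csubspace S \<longleftrightarrow> 0 \<in> S \<and> (\<forall>x\<in>S. \<forall>y\<in>S. x + y \<in> S) \<and> (\<forall>a. \<forall>x\<in>S. scaleC a x \<in> S)"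

definition linear_op :: "('a::complex_inner_space, 'b::complex_inner_space) lop \<Rightarrow> bool" where
  "linear_op A \<longleftrightarrow> csubspace (opdom A)
     \<and> (\<forall>x\<in>opdom A. \<forall>y\<in>opdom A. opfun A (x + y) = opfun A x + opfun A y)
     \<and> (\<forall>a. \<forall>x\<in>opdom A. opfun A (scaleC a x) = scaleC a (opfun A x))"

definition densely_defined :: "('a::complex_inner_space, 'b::complex_inner_space) lop \<Rightarrow> bool" where
  "densely_defined A \<longleftrightarrow> linear_op A \<and> closure (opdom A) = UNIV"

definition closed_op :: "('a::complex_inner_space, 'b::complex_inner_space) lop \<Rightarrow> bool" where
  "closed_op A \<longleftrightarrow> closed {(x, opfun A x) | x. x \<in> opdom A}"

definition adj :: "('a::complex_inner_space, 'b::complex_inner_space) lop \<Rightarrow> ('b, 'a) lop" where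
  "adj A = ({y. \<exists>z. \<forall>x\<in>opdom A. cinner (opfun A x) y = cinner x z},
            \<lambda>y. SOME z. \<forall>x\<in>opdom A. cinner (opfun A x) y = cinner x z)"

definition neg_op :: "('a, 'b::uminus) lop \<Rightarrow> ('a, 'b) lop" where
  "neg_op A = (opdom A, \<lambda>x. - opfun A x)"

definition op_le :: "('a, 'b) lop \<Rightarrow> ('a, 'b) lop \<Rightarrow> bool" where
  "op_le A B \<longleftrightarrow> opdom A \<subseteq> opdom B \<and> (\<forall>x\<in>opdom A. opfun A x = opfun B x)"

text \<open>ring_op D is the operator G-ring = -D*; so D-ring = ring_op G.\<close>

definition ring_op :: "('b::complex_inner_space, 'a::complex_inner_space) lop \<Rightarrow> ('a, 'b) lop" where
  "ring_op D = neg_op (adj D)"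

definition graph_inner :: "('a::complex_inner_space, 'b::complex_inner_space) lop \<Rightarrow> 'a \<Rightarrow> 'a \<Rightarrow> complex" where
  "graph_inner A u v = cinner u v + cinner (opfun A u) (opfun A v)"

definition BD :: "('a::complex_inner_space, 'b::complex_inner_space) lop \<Rightarrow> ('b, 'a) lop \<Rightarrow> 'a set" where
  "BD G D = {u \<in> opdom G. \<forall>v \<in> opdom (ring_op D). graph_inner G u v = 0}"

definition ker_I_comp :: "('b, 'a) lop \<Rightarrow> ('a, 'b) lop \<Rightarrow> 'a set" where
  "ker_I_comp A B = {u \<in> opdom B. opfun B u \<in> opdom A \<and> opfun A (opfun B u) = u}"

end

theory Submission
  imports Defs
begin

text \<open>Taking adjoints in \<open>-G\<^sup>* \<subseteq> D\<close> and using \<open>G\<^sup>*\<^sup>* = G\<close> (closedness) gives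
  \<open>-D\<^sup>* \<subseteq> G\<close>, so \<open>\<mathring>G = -D\<^sup>*\<close> is a restriction of \<open>G\<close>. For \<open>u \<in> dom G\<close> the
  condition \<open>u \<perp> dom \<mathring>G\<close> in the graph inner product then reads
  \<open>(u, v) = (Gu, D\<^sup>*v)\<close> for all \<open>v \<in> dom D\<^sup>*\<close>, which by \<open>D\<^sup>*\<^sup>* = D\<close> says exactly
  \<open>Gu \<in> dom D\<close> and \<open>DGu = u\<close>. The second identity is the same argument with the
  roles of \<open>G\<close> and \<open>D\<close> exchanged. The only analytic input is \<open>A\<^sup>*\<^sup>* = A\<close> for closed
  densely defined \<open>A\<close>, which rests on the orthogonal projection onto the closed graph.\<close>

lemma cinner_add_left: "cinner (x + y) z = cinner x z + cinner y z"
  by (metis cinner_conj cinner_add_right complex_cnj_add)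

lemma cinner_zero_right [simp]: "cinner x 0 = 0"
  using cinner_add_right[of x 0 0] by simp

lemma cinner_zero_left [simp]: "cinner 0 x = 0"
  by (subst cinner_conj) simp

lemma cinner_minus_right: "cinner x (- y) = - cinner x y"
  using cinner_add_right[of x y "- y"] by (simp add: add_eq_0_iff)

lemma cinner_minus_left: "cinner (- x) y = - cinner x y"
  by (metis cinner_conj cinner_minus_right complex_cnj_minus)

lemma cinner_diff_right: "cinner x (y - z) = cinner x y - cinner x z"
  using cinner_add_right[of x y "- z"] by (simp add: cinner_minus_right)

lemma cinner_diff_left: "cinner (x - y) z = cinner x z - cinner y z"
  using cinner_add_left[of x "- y" z] by (simp add: cinner_minus_left)

lemma cinner_scaleR_right: "cinner x (scaleR r y) = complex_of_real r * cinner x y"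
  by (simp flip: scaleC_of_real add: cinner_scaleC_right)

lemma power2_norm_eq_cinner: "(norm x)\<^sup>2 = Re (cinner x x)"
  using norm_cinner[of x] cinner_self_nonneg[of x] by simp

lemma cinner_self_eq_zero: "cinner x x = 0 \<longleftrightarrow> x = 0"
  by (metis cinner_zero_left norm_cinner norm_eq_zero real_sqrt_zero zero_complex.sel(1))

lemma power2_norm_add:
  "(norm (x + y))\<^sup>2 = (norm x)\<^sup>2 + (norm y)\<^sup>2 + 2 * Re (cinner x y)"
proof -
  have "cinner (x + y) (x + y) = cinner x x + cinner x y + cnj (cinner x y) + cinner y y"
    by (simp add: cinner_add_left cinner_add_right cinner_conj[of y x])
  then show ?thesis by (simp add: power2_norm_eq_cinner)
qed

lemma parallelogram_law:
  fixes x y :: "'a::complex_inner_space"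
  shows "(norm (x + y))\<^sup>2 + (norm (x - y))\<^sup>2 = 2 * (norm x)\<^sup>2 + 2 * (norm y)\<^sup>2"
  using power2_norm_add[of x y] power2_norm_add[of x "- y"] by (simp add: cinner_minus_right)

lemma Re_cinner_polarization:
  fixes x y :: "'a::complex_inner_space"
  shows "Re (cinner x y) = ((norm (x + y))\<^sup>2 - (norm (x - y))\<^sup>2) / 4"
  using power2_norm_add[of x y] power2_norm_add[of x "- y"] by (simp add: cinner_minus_right)

lemma tendsto_cinner_left:
  fixes f :: "'c \<Rightarrow> 'a::complex_inner_space"
  assumes "(f \<longlongrightarrow> l) F"
  shows "((\<lambda>n. cinner (f n) w) \<longlongrightarrow> cinner l w) F"
proof -
  have Re: "((\<lambda>n. Re (cinner (f n) y)) \<longlongrightarrow> Re (cinner l y)) F" for y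
    unfolding Re_cinner_polarization by (intro tendsto_intros assms) simp
  have "Im (cinner u w) = - Re (cinner u (scaleC \<i> w))" for u :: 'a
    by (simp add: cinner_scaleC_right)
  then have Im: "((\<lambda>n. Im (cinner (f n) w)) \<longlongrightarrow> Im (cinner l w)) F"
    using tendsto_minus[OF Re[of "scaleC \<i> w"]] by simp
  show ?thesis
    using Re[of w] Im by (simp add: tendsto_complex_iff)
qed

lemma orthogonal_dense_eq_zero:
  fixes w :: "'a::complex_inner_space"
  assumes "closure S = UNIV" and "\<And>x. x \<in> S \<Longrightarrow> cinner x w = 0"
  shows "w = 0"
proof -
  obtain f where f: "\<And>n. f n \<in> S" "f \<longlonglongrightarrow> w"
    using assms(1) closure_sequential by blast
  have "(\<lambda>n. cinner (f n) w) \<longlonglongrightarrow> cinner w w"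
    by (rule tendsto_cinner_left[OF f(2)])
  moreover have "(\<lambda>n. cinner (f n) w) = (\<lambda>n. 0)"
    using f(1) assms(2) by auto
  ultimately have "cinner w w = 0"
    using LIMSEQ_unique[of "\<lambda>n. 0"] by auto
  then show ?thesis by (simp add: cinner_self_eq_zero)
qed

lemma nonneg_quadratic_imp_linear_coeff_zero:
  fixes c N :: real
  assumes "N \<ge> 0" and nonneg: "\<And>t. 0 \<le> - 2 * t * c + t\<^sup>2 * N"
  shows "c = 0"
proof (rule ccontr)
  assume "c \<noteq> 0"
  define t where "t = c / (N + 1)"
  have c: "c = t * (N + 1)" and "t \<noteq> 0"
    using \<open>N \<ge> 0\<close> \<open>c \<noteq> 0\<close> by (auto simp: t_def)
  have "0 \<le> - 2 * t * c + t\<^sup>2 * N" by (rule nonneg)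
  also have "\<dots> = - (t\<^sup>2 * (N + 2))"
    unfolding c by (simp add: algebra_simps power2_eq_square)
  also have "\<dots> < 0"
    using \<open>t \<noteq> 0\<close> \<open>N \<ge> 0\<close> by simp
  finally show False by simp
qed

lemma csubspace_scaleR:
  assumes "csubspace S" "x \<in> S"
  shows "scaleR r x \<in> S"
  using assms by (simp add: csubspace_def flip: scaleC_of_real)

text \<open>The parallelogram law applied to \<open>z - f m\<close>, \<open>z - f n\<close> and the midpoint of \<open>f m\<close>, \<open>f n\<close>.\<close>

lemma minimizing_sequence_Cauchy:
  fixes f :: "nat \<Rightarrow> 'a::complex_inner_space"
  assumes S: "csubspace S" and fS: "\<And>n. f n \<in> S"
    and min: "\<And>n. (norm (z - f n))\<^sup>2 \<le> (infdist z S)\<^sup>2 + 1 / real (Suc n)"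
  shows "Cauchy f"
proof (rule metric_CauchyI)
  have bound: "(norm (f m - f n))\<^sup>2 \<le> 2 / real (Suc m) + 2 / real (Suc n)" for m n
  proof -
    have "scaleR (1/2) (f m + f n) \<in> S"
      using S fS by (simp add: csubspace_def csubspace_scaleR)
    then have "infdist z S \<le> norm (z - scaleR (1/2) (f m + f n))"
      using infdist_le by (metis dist_norm)
    then have "(infdist z S)\<^sup>2 \<le> (norm (z - scaleR (1/2) (f m + f n)))\<^sup>2"
      by (simp add: infdist_nonneg power_mono)
    also have "\<dots> = (norm ((z - f m) + (z - f n)))\<^sup>2 / 4"
    proof -
      have "(z - f m) + (z - f n) = scaleR 2 (z - scaleR (1/2) (f m + f n))"
        by (simp add: algebra_simps scaleR_2)
      then show ?thesis by (simp add: power2_eq_square)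
    qed
    finally have "4 * (infdist z S)\<^sup>2 \<le> (norm ((z - f n) + (z - f m)))\<^sup>2"
      by (simp add: add.commute)
    moreover have "(norm (f m - f n))\<^sup>2
        = 2 * (norm (z - f n))\<^sup>2 + 2 * (norm (z - f m))\<^sup>2 - (norm ((z - f n) + (z - f m)))\<^sup>2"
      using parallelogram_law[of "z - f n" "z - f m"] by simp
    ultimately show ?thesis
      using min[of m] min[of n] by linarith
  qed
  fix e :: real assume "0 < e"
  obtain N where "4 / e\<^sup>2 < real N"
    using reals_Archimedean2 by blast
  then have N: "4 / e\<^sup>2 < real (Suc N)" by simp
  show "\<exists>M. \<forall>m\<ge>M. \<forall>n\<ge>M. dist (f m) (f n) < e"
  proof (intro exI allI impI)
    fix m n assume "N \<le> m" "N \<le> n"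
    then have "2 / real (Suc m) \<le> 2 / real (Suc N)" "2 / real (Suc n) \<le> 2 / real (Suc N)"
      by (auto intro!: divide_left_mono)
    moreover have "4 / real (Suc N) < e\<^sup>2"
      using N \<open>0 < e\<close> by (simp add: field_simps)
    ultimately have "(dist (f m) (f n))\<^sup>2 < e\<^sup>2"
      using bound[of m n] by (simp add: dist_norm)
    then show "dist (f m) (f n) < e"
      using \<open>0 < e\<close> by (simp add: power_less_imp_less_base)
  qed
qed

lemma nearest_point_exists:
  fixes S :: "'a::{complex_inner_space, complete_space} set"
  assumes "closed S" "csubspace S"
  shows "\<exists>a\<in>S. \<forall>s\<in>S. norm (z - a) \<le> norm (z - s)"
proof -
  have "S \<noteq> {}" using \<open>csubspace S\<close> by (auto simp: csubspace_def)
  have "\<exists>s\<in>S. (norm (z - s))\<^sup>2 \<le> (infdist z S)\<^sup>2 + 1 / real (Suc n)" for n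
  proof -
    have "infdist z S < sqrt ((infdist z S)\<^sup>2 + 1 / real (Suc n))"
      by (rule real_less_rsqrt) simp
    then obtain s where s: "s \<in> S" "dist z s < sqrt ((infdist z S)\<^sup>2 + 1 / real (Suc n))"
      using \<open>S \<noteq> {}\<close> by (auto simp: infdist_notempty cINF_less_iff)
    then have "(norm (z - s))\<^sup>2 \<le> (infdist z S)\<^sup>2 + 1 / real (Suc n)"
      using power_strict_mono[OF s(2)[unfolded dist_norm] norm_ge_zero, of 2] by simp
    with s show ?thesis by blast
  qed
  then obtain f where fS: "\<And>n. f n \<in> S"
    and min: "\<And>n. (norm (z - f n))\<^sup>2 \<le> (infdist z S)\<^sup>2 + 1 / real (Suc n)"
    by metis
  obtain a where fa: "f \<longlonglongrightarrow> a"
    using minimizing_sequence_Cauchy[OF \<open>csubspace S\<close> fS min] convergent_eq_Cauchy by blast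
  have "a \<in> S"
    using closed_sequentially[OF \<open>closed S\<close>] fS fa by blast
  have "(norm (z - a))\<^sup>2 \<le> (infdist z S)\<^sup>2"
  proof (rule LIMSEQ_le)
    show "(\<lambda>n. (norm (z - f n))\<^sup>2) \<longlonglongrightarrow> (norm (z - a))\<^sup>2"
      by (intro tendsto_intros fa)
    show "(\<lambda>n. (infdist z S)\<^sup>2 + 1 / real (Suc n)) \<longlonglongrightarrow> (infdist z S)\<^sup>2"
      using tendsto_add[OF tendsto_const LIMSEQ_inverse_real_of_nat] by (simp add: inverse_eq_divide)
  qed (use min in blast)
  then have "norm (z - a) \<le> norm (z - s)" if "s \<in> S" for s
    using infdist_le[OF that, of z] infdist_nonneg[of z S]
    by (metis dist_norm norm_ge_zero order_trans power2_le_imp_le)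
  with \<open>a \<in> S\<close> show ?thesis by blast
qed

text \<open>Perturbing the nearest point along \<open>t g\<close> gives a real quadratic in \<open>t\<close> that is
  minimal at \<open>t = 0\<close>; replacing \<open>g\<close> by \<open>\<i> g\<close> takes care of the imaginary part.\<close>

lemma nearest_point_orthogonal:
  assumes S: "csubspace S" and "a \<in> S" "g \<in> S"
    and min: "\<And>s. s \<in> S \<Longrightarrow> norm (z - a) \<le> norm (z - s)"
  shows "cinner (z - a) g = 0"
proof -
  have Re: "Re (cinner (z - a) h) = 0" if "h \<in> S" for h
  proof (rule nonneg_quadratic_imp_linear_coeff_zero[of "(norm h)\<^sup>2"])
    fix t :: real
    have "a + scaleR t h \<in> S"
      using S \<open>a \<in> S\<close> \<open>h \<in> S\<close> by (simp add: csubspace_def csubspace_scaleR)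
    then have "(norm (z - a))\<^sup>2 \<le> (norm ((z - a) + - scaleR t h))\<^sup>2"
      using min by (simp add: power_mono diff_diff_eq)
    also have "\<dots> = (norm (z - a))\<^sup>2 + t\<^sup>2 * (norm h)\<^sup>2 - 2 * t * Re (cinner (z - a) h)"
      by (simp only: power2_norm_add cinner_minus_right cinner_scaleR_right norm_minus_cancel
          norm_scaleR power_mult_distrib) (simp add: power2_abs)
    finally show "0 \<le> - 2 * t * Re (cinner (z - a) h) + t\<^sup>2 * (norm h)\<^sup>2" by simp
  qed simp
  have "Re (cinner (z - a) (scaleC \<i> g)) = 0"
    using Re S \<open>g \<in> S\<close> by (simp add: csubspace_def)
  then have "Im (cinner (z - a) g) = 0"
    by (simp add: cinner_scaleC_right)
  with Re[OF \<open>g \<in> S\<close>] show ?thesis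
    by (simp add: complex_eq_iff)
qed

lemma orthogonal_projection_exists:
  fixes S :: "'a::{complex_inner_space, complete_space} set"
  assumes "closed S" "csubspace S"
  shows "\<exists>a\<in>S. \<forall>g\<in>S. cinner (z - a) g = 0"
proof -
  obtain a where "a \<in> S" and "\<forall>s\<in>S. norm (z - a) \<le> norm (z - s)"
    using nearest_point_exists[OF assms] by blast
  then show ?thesis
    using nearest_point_orthogonal[OF assms(2)] by blast
qed

instantiation prod :: (complex_inner_space, complex_inner_space) complex_inner_space
begin

definition scaleC_prod_def: "scaleC a x = (scaleC a (fst x), scaleC a (snd x))"

definition cinner_prod_def: "cinner x y = cinner (fst x) (fst y) + cinner (snd x) (snd y)"

instance
proof
  fix a b :: complex and x y z :: "'a \<times> 'b" and r :: real
  show "scaleC a (x + y) = scaleC a x + scaleC a y"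
    by (simp add: scaleC_prod_def scaleC_add_right)
  show "scaleC (a + b) x = scaleC a x + scaleC b x"
    by (simp add: scaleC_prod_def scaleC_add_left)
  show "scaleC a (scaleC b x) = scaleC (a * b) x"
    by (simp add: scaleC_prod_def scaleC_scaleC)
  show "scaleC 1 x = x"
    by (simp add: scaleC_prod_def scaleC_one)
  show "scaleC (complex_of_real r) x = r *\<^sub>R x"
    by (simp add: scaleC_prod_def scaleC_of_real scaleR_prod_def)
  show "cinner x y = cnj (cinner y x)"
    by (simp add: cinner_prod_def cinner_conj[of "fst x" "fst y"] cinner_conj[of "snd x" "snd y"])
  show "cinner x (y + z) = cinner x y + cinner x z"
    by (simp add: cinner_prod_def cinner_add_right)
  show "cinner x (scaleC a y) = a * cinner x y"
    by (simp add: cinner_prod_def scaleC_prod_def cinner_scaleC_right algebra_simps)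
  show "0 \<le> Re (cinner x x)"
    by (simp add: cinner_prod_def cinner_self_nonneg)
  show "norm x = sqrt (Re (cinner x x))"
    by (simp add: cinner_prod_def norm_prod_def power2_norm_eq_cinner)
qed

end

lemma csubspace_graph:
  assumes "linear_op A"
  shows "csubspace {(x, opfun A x) | x. x \<in> opdom A}"
proof -
  have dom: "csubspace (opdom A)"
    and add: "\<And>x y. x \<in> opdom A \<Longrightarrow> y \<in> opdom A \<Longrightarrow> opfun A (x + y) = opfun A x + opfun A y"
    and scale: "\<And>c x. x \<in> opdom A \<Longrightarrow> opfun A (scaleC c x) = scaleC c (opfun A x)"
    using assms by (auto simp: linear_op_def)
  have "0 \<in> opdom A" using dom by (simp add: csubspace_def)
  then have "opfun A 0 = 0" using add[of 0 0] by simp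
  with dom add scale \<open>0 \<in> opdom A\<close> show ?thesis
    unfolding csubspace_def scaleC_prod_def zero_prod_def by force
qed

lemma opdom_neg_op [simp]: "opdom (neg_op A) = opdom A"
  by (simp add: neg_op_def opdom_def)

lemma opfun_neg_op [simp]: "opfun (neg_op A) x = - opfun A x"
  by (simp add: neg_op_def opfun_def)

lemma opdom_ring_op [simp]: "opdom (ring_op A) = opdom (adj A)"
  by (simp add: ring_op_def)

lemma adj_inner:
  assumes "y \<in> opdom (adj A)" "x \<in> opdom A"
  shows "cinner (opfun A x) y = cinner x (opfun (adj A) y)"
proof -
  from assms(1) obtain z where "\<forall>x\<in>opdom A. cinner (opfun A x) y = cinner x z"
    by (auto simp: adj_def opdom_def)
  then have "\<forall>x\<in>opdom A. cinner (opfun A x) y = cinner x (opfun (adj A) y)"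
    unfolding adj_def opfun_def snd_conv by (rule someI)
  with assms(2) show ?thesis by blast
qed

text \<open>The adjoint is single-valued only because the domain is dense; otherwise the
  \<open>SOME\<close> in its definition picks an arbitrary admissible value.\<close>

lemma adj_eqI:
  assumes "closure (opdom A) = UNIV"
    and "\<And>x. x \<in> opdom A \<Longrightarrow> cinner (opfun A x) y = cinner x z"
  shows "y \<in> opdom (adj A) \<and> opfun (adj A) y = z"
proof -
  have y: "y \<in> opdom (adj A)"
    using assms(2) by (auto simp: adj_def opdom_def)
  have "cinner x (opfun (adj A) y - z) = 0" if "x \<in> opdom A" for x
    using adj_inner[OF y that] assms(2)[OF that] by (simp add: cinner_diff_right)
  then have "opfun (adj A) y - z = 0"
    by (rule orthogonal_dense_eq_zero[OF assms(1)])
  with y show ?thesis by simp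
qed

lemma adj_if_orthogonal_graph:
  assumes "closure (opdom A) = UNIV"
    and orth: "\<And>x. x \<in> opdom A \<Longrightarrow> cinner p x + cinner q (opfun A x) = 0"
  shows "q \<in> opdom (adj A) \<and> opfun (adj A) q = - p"
proof (rule adj_eqI[OF assms(1)])
  fix x assume "x \<in> opdom A"
  have "cinner x p + cinner (opfun A x) q = cnj (cinner p x + cinner q (opfun A x))"
    by (simp add: cinner_conj[of p x] cinner_conj[of q "opfun A x"])
  also have "\<dots> = 0"
    using orth[OF \<open>x \<in> opdom A\<close>] by simp
  finally show "cinner (opfun A x) q = cinner x (- p)"
    by (simp add: cinner_minus_right add_eq_0_iff add.commute)
qed

text \<open>If
  \<open>(p, q)\<close> is the component of \<open>(v, w)\<close> orthogonal to the graph of \<open>A\<close>, then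
  \<open>A\<^sup>* q = -p\<close>, and testing the hypothesis on \<open>q\<close> shows \<open>\<parallel>p\<parallel>\<^sup>2 + \<parallel>q\<parallel>\<^sup>2 = 0\<close>.\<close>

lemma closed_op_adj_adjD:
  fixes A :: "('a::{complex_inner_space, complete_space}, 'b::{complex_inner_space, complete_space}) lop"
  assumes "densely_defined A" "closed_op A"
    and adj_adj: "\<And>y. y \<in> opdom (adj A) \<Longrightarrow> cinner (opfun (adj A) y) v = cinner y w"
  shows "v \<in> opdom A \<and> opfun A v = w"
proof -
  have dense: "closure (opdom A) = UNIV" and "linear_op A"
    using assms(1) by (auto simp: densely_defined_def)
  obtain x0 where x0: "x0 \<in> opdom A"
    and orth: "\<forall>g\<in>{(x, opfun A x) | x. x \<in> opdom A}. cinner ((v, w) - (x0, opfun A x0)) g = 0"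
    using orthogonal_projection_exists[OF _ csubspace_graph[OF \<open>linear_op A\<close>], of "(v, w)"]
      assms(2) unfolding closed_op_def by blast
  define p where "p = v - x0"
  define q where "q = w - opfun A x0"
  have orth_graph: "cinner p x + cinner q (opfun A x) = 0" if "x \<in> opdom A" for x
    using orth that by (force simp: p_def q_def cinner_prod_def)
  have "q \<in> opdom (adj A)" and "opfun (adj A) q = - p"
    using adj_if_orthogonal_graph[OF dense orth_graph] by auto
  then have "cinner p v + cinner q w = 0"
    using adj_adj[of q] by (simp add: cinner_minus_left add_eq_0_iff)
  moreover have "cinner p p + cinner q q
      = (cinner p v + cinner q w) - (cinner p x0 + cinner q (opfun A x0))"
    by (simp add: p_def q_def cinner_diff_right cinner_diff_left)
  ultimately have "cinner p p + cinner q q = 0"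
    using orth_graph[OF x0] by simp
  then have "(norm p)\<^sup>2 + (norm q)\<^sup>2 = 0"
    by (simp add: power2_norm_eq_cinner flip: plus_complex.sel(1))
  then have "p = 0" "q = 0"
    by (simp_all add: add_nonneg_eq_0_iff)
  with x0 show ?thesis
    by (simp add: p_def q_def)
qed

lemma neg_adj_le_swap:
  fixes G :: "('a::{complex_inner_space, complete_space}, 'b::{complex_inner_space, complete_space}) lop"
  assumes "densely_defined G" "closed_op G"
    and "op_le (neg_op (adj G)) D"
  shows "op_le (neg_op (adj D)) G"
proof -
  have D: "y \<in> opdom D" "opfun D y = - opfun (adj G) y" if "y \<in> opdom (adj G)" for y
    using assms(3) that by (auto simp: op_le_def)
  have "v \<in> opdom G \<and> opfun G v = - opfun (adj D) v" if v: "v \<in> opdom (adj D)" for v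
  proof (rule closed_op_adj_adjD[OF assms(1,2)])
    fix y assume y: "y \<in> opdom (adj G)"
    have "- cinner (opfun (adj G) y) v = cinner y (opfun (adj D) v)"
      using adj_inner[OF v D(1)[OF y]] D(2)[OF y] by (simp add: cinner_minus_left)
    then show "cinner (opfun (adj G) y) v = cinner y (- opfun (adj D) v)"
      by (metis cinner_minus_right minus_minus)
  qed
  then show ?thesis
    by (auto simp: op_le_def)
qed

lemma BD_eq_ker_I_comp:
  fixes D :: "('b::{complex_inner_space, complete_space}, 'a::{complex_inner_space, complete_space}) lop"
  assumes "densely_defined D" "closed_op D"
    and "op_le (neg_op (adj D)) G"
  shows "BD G D = ker_I_comp D G"
proof -
  have G: "opfun G v = - opfun (adj D) v" if "v \<in> opdom (adj D)" for v
    using assms(3) that by (simp add: op_le_def)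
  have "(\<forall>v\<in>opdom (adj D). cinner u v + cinner (opfun G u) (opfun G v) = 0)
      \<longleftrightarrow> opfun G u \<in> opdom D \<and> opfun D (opfun G u) = u" for u
  proof
    assume orth: "\<forall>v\<in>opdom (adj D). cinner u v + cinner (opfun G u) (opfun G v) = 0"
    show "opfun G u \<in> opdom D \<and> opfun D (opfun G u) = u"
    proof (rule closed_op_adj_adjD[OF assms(1,2)])
      fix v assume v: "v \<in> opdom (adj D)"
      then have "cinner u v = cinner (opfun G u) (opfun (adj D) v)"
        using orth G by (simp add: cinner_minus_right add_eq_0_iff)
      then show "cinner (opfun (adj D) v) (opfun G u) = cinner v u"
        by (metis cinner_conj)
    qed
  next
    assume "opfun G u \<in> opdom D \<and> opfun D (opfun G u) = u"
    then show "\<forall>v\<in>opdom (adj D). cinner u v + cinner (opfun G u) (opfun G v) = 0"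
      using adj_inner G by (fastforce simp: cinner_minus_right)
  qed
  then show ?thesis
    by (auto simp: BD_def ker_I_comp_def graph_inner_def)
qed

theorem lemma2p5:
  fixes G :: "('a::{complex_inner_space, complete_space}, 'b::{complex_inner_space, complete_space}) lop"
    and D :: "('b, 'a) lop"
  assumes "densely_defined G" and "closed_op G"
    and "densely_defined D" and "closed_op D"
    and "op_le (neg_op (adj G)) D"
  shows "BD G D = ker_I_comp D G \<and> BD D G = ker_I_comp G D"
proof
  have "op_le (neg_op (adj D)) G"
    using neg_adj_le_swap[OF assms(1,2,5)] .
  then show "BD G D = ker_I_comp D G"
    using BD_eq_ker_I_comp[OF assms(3,4)] by blast
  show "BD D G = ker_I_comp G D"
    using BD_eq_ker_I_comp[OF assms(1,2,5)] .
qed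

end
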